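(* For every context $\Gamma$, variables $x,y$ and terms $A,M,B$: if $y\notin\mathrm{dom}\,\Gamma$ and $\Gamma,x:A\vdash M:B$, then $\Gamma,y:A\vdash M[x:=v\,y]:B[x:=v\,y]$.
   Context: Let $\mathcal V$ (the variables) be a type with decidable equality, equipped with functions $\mathrm{encode}:\mathcal V\to\mathbb N$ and $\mathrm{decode}:\mathbb N\to\mathcal V$ such that $\mathrm{encode}(\mathrm{decode}\,n)=n$ for all $n$. Let $\mathcal C$ (the constants) be any type. Terms $\Lambda$ are generated by: $c\,k$ ($k\in\mathcal C$), $v\,x$ ($x\in\mathcal V$), $\lambda[x:A]M$, $\Pi[x:A]B$ and $M\cdot N$; in $\lambda[x:A]M$ and $\Pi[x:A]B$ the name $x$ binds in $M$ (resp. $B$) but not in $A$. Terms are raw first-order syntax (not identified up to renaming of bound variables) and $\equiv$ denotes syntactic identity. The list of free variables is $\mathrm{fv}(c\,k)=[\,]$, $\mathrm{fv}(v\,x)=[x]$, $\mathrm{fv}(\lambda[x:A]M)=\mathrm{fv}\,A\mathbin{+\!\!+}(\mathrm{fv}\,M-x)$, $\mathrm{fv}(\Pi[x:A]B)=\mathrm{fv}\,A\mathbin{+\!\!+}(\mathrm{fv}\,B-x)$, $\mathrm{fv}(M\cdot N)=\mathrm{fv}\,M\mathbin{+\!\!+}\mathrm{fv}\,N$, where $\mathbin{+\!\!+}$ is list concatenation and $xs-x$ deletes every occurrence of $x$ from $xs$. Fix a function $\chi':\mathrm{List}\,\mathbb N\to\mathbb N$ with $\chi'(ns)\notin ns$ for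 every list $ns$, and put $X'(xs)=\mathrm{decode}(\chi'(\mathrm{map}\ \mathrm{encode}\ xs))$. A substitution is any function $\sigma:\mathcal V\to\Lambda$; $\iota=v$ is the identity substitution; $(\sigma,x:=N)(y)=N$ if $y=x$ and $\sigma\,y$ otherwise. For a substitution $\sigma$ and a list $xs$ of variables, $X(\sigma,xs)=X'(\text{concatenation of the lists }\mathrm{fv}(\sigma\,y)\text{ for }y\in xs)$. The action $M\bullet\sigma$ is defined by structural recursion: $c\,k\bullet\sigma=c\,k$; $v\,x\bullet\sigma=\sigma\,x$; $(M\cdot N)\bullet\sigma=(M\bullet\sigma)\cdot(N\bullet\sigma)$; $(\lambda[x:A]M)\bullet\sigma=\lambda[y:A\bullet\sigma](M\bullet(\sigma,x:=v\,y))$ with $y=X(\sigma,\mathrm{fv}\,M-x)$; $(\Pi[x:A]B)\bullet\sigma=\Pi[y:A\bullet\sigma](B\bullet(\sigma,x:=v\,y))$ with $y=X(\sigma,\mathrm{fv}\,B-x)$. Unary substitution is $M[x:=N]=M\bullet(\iota,x:=N)$. $\alpha$-conversion $\sim_\alpha$ is the inductively defined relation with rules: $c\,k\sim_\alpha c\,k$; $v\,x\sim_\alpha v\,x$; $M\cdot N\sim_\alpha M'\cdot N'$ if $M\sim_\alpha M'$ and $N\sim_\alpha N'$; $\lambda[x:A]M\sim_\alpha\lambda[x':A']M'$ if $A\sim_\alpha A'$ and there is a variable $y$ with $y\notin\mathrm{fv}\,M-x$, $y\notin\mathrm{fv}\,M'-x'$ and $M[x:=v\,y]\equiv M'[x':=v\,y]$;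 and the same rule with $\Pi$ in place of $\lambda$. $\beta$-contraction is $(\lambda[x:A]M)\cdot N\ \triangleright_\beta\ M[x:=N]$. One-step $\beta$-reduction $\to_\beta$ is its contextual closure, inductively: $M\to_\beta N$ if $M\triangleright_\beta N$; $\lambda[x:A]M\to_\beta\lambda[x:A]M'$ and $\Pi[x:A]M\to_\beta\Pi[x:A]M'$ if $M\to_\beta M'$; $\lambda[x:A]M\to_\beta\lambda[x:A']M$ and $\Pi[x:A]M\to_\beta\Pi[x:A']M$ if $A\to_\beta A'$; $M\cdot P\to_\beta N\cdot P$ and $P\cdot M\to_\beta P\cdot N$ if $M\to_\beta N$. $\beta$-conversion $\simeq_\beta$ is the equivalence (reflexive–symmetric–transitive) closure of $\sim_\alpha\cup\to_\beta$. Pure Type System: fix a binary relation $\mathcal A\subseteq\mathcal C\times\mathcal C$ (axioms) and a ternary relation $\mathcal R\subseteq\mathcal C\times\mathcal C\times\mathcal C$ (rules). A context is a finite list of pairs $(x,A)$ with $x\in\mathcal V$, $A\in\Lambda$; $\Gamma,x:A$ denotes the list $(x,A)::\Gamma$; $\mathrm{dom}\,\Gamma$ is the list of first components; $(x,A)\in\Gamma$ is list membership. The judgments $\Gamma\ \mathrm{ok}$ and $\Gamma\vdash M:A$ are defined mutually inductively by: (nil) $[\,]\ \mathrm{ok}$; (cons) if $\Gamma\ \mathrm{ok}$, $\Gamma\vdash A:c\,s$ and $x\notin\mathrm{dom}\,\Gamma$ then $\Gamma,x:A\ \mathrm{ok}$; (sort) if $\Gamma\ \mathrm{ok}$ and $\mathcal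 A\,s_1\,s_2$ then $\Gamma\vdash c\,s_1:c\,s_2$; (var) if $\Gamma\ \mathrm{ok}$ and $(x,A)\in\Gamma$ then $\Gamma\vdash v\,x:A$; (prod) if $\mathcal R\,s_1\,s_2\,s_3$, $\Gamma\vdash A:c\,s_1$ and for every $y\notin\mathrm{dom}\,\Gamma$, $\Gamma,y:A\vdash B[x:=v\,y]:c\,s_2$, then $\Gamma\vdash\Pi[x:A]B:c\,s_3$; (abs) if $\mathcal R\,s_1\,s_2\,s_3$, $\Gamma\vdash A:c\,s_1$, for every $z\notin\mathrm{dom}\,\Gamma$, $\Gamma,z:A\vdash B[y:=v\,z]:c\,s_2$, and for every $z\notin\mathrm{dom}\,\Gamma$, $\Gamma,z:A\vdash M[x:=v\,z]:B[y:=v\,z]$, then $\Gamma\vdash\lambda[x:A]M:\Pi[y:A]B$; (app) if $\Gamma\vdash M:\Pi[x:A]B$, $\Gamma\vdash N:A$ and $\Gamma\vdash B[x:=N]:c\,s$ for some $s$, then $\Gamma\vdash M\cdot N:B[x:=N]$; (conv) if $\Gamma\vdash M:A$, $A\simeq_\beta B$ and $\Gamma\vdash B:c\,s$ for some $s$, then $\Gamma\vdash M:B$. (The premises quantified over all fresh names in (prod) and (abs) are infinitely branching.) *)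

theory Defs
  imports Main
begin

text \<open>Raw first-order terms: constants of type 'c, variables of type 'v.
  Lam x A M and Pi x A B bind x in M (resp. B) but not in A.\<close>
datatype ('c, 'v) trm =
    Const 'c
  | Var 'v
  | Lam 'v "('c, 'v) trm" "('c, 'v) trm"
  | Pi 'v "('c, 'v) trm" "('c, 'v) trm"
  | App "('c, 'v) trm" "('c, 'v) trm"

primrec fv :: "('c, 'v) trm \<Rightarrow> 'v list" where
  "fv (Const k) = []"
| "fv (Var x) = [x]"
| "fv (Lam x A M) = fv A @ removeAll x (fv M)"
| "fv (Pi x A B) = fv A @ removeAll x (fv B)"
| "fv (App M N) = fv M @ fv N"

definition var_setup :: "('v \<Rightarrow> nat) \<Rightarrow> (nat \<Rightarrow> 'v) \<Rightarrow> (nat list \<Rightarrow> nat) \<Rightarrow> bool" where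
  "var_setup enc dec chi \<longleftrightarrow> (\<forall>n. enc (dec n) = n) \<and> (\<forall>ns. chi ns \<notin> set ns)"

definition Xfresh' :: "('v \<Rightarrow> nat) \<Rightarrow> (nat \<Rightarrow> 'v) \<Rightarrow> (nat list \<Rightarrow> nat) \<Rightarrow> 'v list \<Rightarrow> 'v" where
  "Xfresh' enc dec chi xs = dec (chi (map enc xs))"

definition Xfresh :: "('v \<Rightarrow> nat) \<Rightarrow> (nat \<Rightarrow> 'v) \<Rightarrow> (nat list \<Rightarrow> nat)
    \<Rightarrow> ('v \<Rightarrow> ('c, 'v) trm) \<Rightarrow> 'v list \<Rightarrow> 'v" where
  "Xfresh enc dec chi \<sigma> xs = Xfresh' enc dec chi (concat (map (\<lambda>y. fv (\<sigma> y)) xs))"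

primrec subst :: "('v \<Rightarrow> nat) \<Rightarrow> (nat \<Rightarrow> 'v) \<Rightarrow> (nat list \<Rightarrow> nat)
    \<Rightarrow> ('c, 'v) trm \<Rightarrow> ('v \<Rightarrow> ('c, 'v) trm) \<Rightarrow> ('c, 'v) trm" where
  "subst enc dec chi (Const k) \<sigma> = Const k"
| "subst enc dec chi (Var x) \<sigma> = \<sigma> x"
| "subst enc dec chi (App M N) \<sigma> = App (subst enc dec chi M \<sigma>) (subst enc dec chi N \<sigma>)"
| "subst enc dec chi (Lam x A M) \<sigma> =
     (let y = Xfresh enc dec chi \<sigma> (removeAll x (fv M))
      in Lam y (subst enc dec chi A \<sigma>) (subst enc dec chi M (\<sigma>(x := Var y))))"
| "subst enc dec chi (Pi x A B) \<sigma> =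
     (let y = Xfresh enc dec chi \<sigma> (removeAll x (fv B))
      in Pi y (subst enc dec chi A \<sigma>) (subst enc dec chi B (\<sigma>(x := Var y))))"

definition usubst :: "('v \<Rightarrow> nat) \<Rightarrow> (nat \<Rightarrow> 'v) \<Rightarrow> (nat list \<Rightarrow> nat)
    \<Rightarrow> ('c, 'v) trm \<Rightarrow> 'v \<Rightarrow> ('c, 'v) trm \<Rightarrow> ('c, 'v) trm" where
  "usubst enc dec chi M x N = subst enc dec chi M (Var(x := N))"

inductive alpha :: "('v \<Rightarrow> nat) \<Rightarrow> (nat \<Rightarrow> 'v) \<Rightarrow> (nat list \<Rightarrow> nat)
    \<Rightarrow> ('c, 'v) trm \<Rightarrow> ('c, 'v) trm \<Rightarrow> bool"
  for enc dec chi where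
  alpha_const: "alpha enc dec chi (Const k) (Const k)"
| alpha_var: "alpha enc dec chi (Var x) (Var x)"
| alpha_app: "alpha enc dec chi M M' \<Longrightarrow> alpha enc dec chi N N'
    \<Longrightarrow> alpha enc dec chi (App M N) (App M' N')"
| alpha_lam: "alpha enc dec chi A A' \<Longrightarrow> y \<notin> set (removeAll x (fv M))
    \<Longrightarrow> y \<notin> set (removeAll x' (fv M'))
    \<Longrightarrow> usubst enc dec chi M x (Var y) = usubst enc dec chi M' x' (Var y)
    \<Longrightarrow> alpha enc dec chi (Lam x A M) (Lam x' A' M')"
| alpha_pi: "alpha enc dec chi A A' \<Longrightarrow> y \<notin> set (removeAll x (fv M))
    \<Longrightarrow> y \<notin> set (removeAll x' (fv M'))
    \<Longrightarrow> usubst enc dec chi M x (Var y) = usubst enc dec chi M' x' (Var y)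
    \<Longrightarrow> alpha enc dec chi (Pi x A M) (Pi x' A' M')"

inductive beta :: "('v \<Rightarrow> nat) \<Rightarrow> (nat \<Rightarrow> 'v) \<Rightarrow> (nat list \<Rightarrow> nat)
    \<Rightarrow> ('c, 'v) trm \<Rightarrow> ('c, 'v) trm \<Rightarrow> bool"
  for enc dec chi where
  beta_contr: "beta enc dec chi (App (Lam x A M) N) (usubst enc dec chi M x N)"
| beta_lam_body: "beta enc dec chi M M' \<Longrightarrow> beta enc dec chi (Lam x A M) (Lam x A M')"
| beta_pi_body: "beta enc dec chi M M' \<Longrightarrow> beta enc dec chi (Pi x A M) (Pi x A M')"
| beta_lam_dom: "beta enc dec chi A A' \<Longrightarrow> beta enc dec chi (Lam x A M) (Lam x A' M)"
| beta_pi_dom: "beta enc dec chi A A' \<Longrightarrow> beta enc dec chi (Pi x A M) (Pi x A' M)"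
| beta_app_l: "beta enc dec chi M N \<Longrightarrow> beta enc dec chi (App M P) (App N P)"
| beta_app_r: "beta enc dec chi M N \<Longrightarrow> beta enc dec chi (App P M) (App P N)"

definition betaconv :: "('v \<Rightarrow> nat) \<Rightarrow> (nat \<Rightarrow> 'v) \<Rightarrow> (nat list \<Rightarrow> nat)
    \<Rightarrow> ('c, 'v) trm \<Rightarrow> ('c, 'v) trm \<Rightarrow> bool" where
  "betaconv enc dec chi = (\<lambda>M N. alpha enc dec chi M N \<or> beta enc dec chi M N
                                 \<or> alpha enc dec chi N M \<or> beta enc dec chi N M)\<^sup>*\<^sup>*"

type_synonym ('c, 'v) ctx = "('v \<times> ('c, 'v) trm) list"

text \<open>Pure Type System with axioms Ax and rules Rl. Gamma, x:A is (x, A) # Gamma.\<close>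
inductive ctx_ok :: "('v \<Rightarrow> nat) \<Rightarrow> (nat \<Rightarrow> 'v) \<Rightarrow> (nat list \<Rightarrow> nat)
    \<Rightarrow> ('c \<Rightarrow> 'c \<Rightarrow> bool) \<Rightarrow> ('c \<Rightarrow> 'c \<Rightarrow> 'c \<Rightarrow> bool) \<Rightarrow> ('c, 'v) ctx \<Rightarrow> bool"
  and typing :: "('v \<Rightarrow> nat) \<Rightarrow> (nat \<Rightarrow> 'v) \<Rightarrow> (nat list \<Rightarrow> nat)
    \<Rightarrow> ('c \<Rightarrow> 'c \<Rightarrow> bool) \<Rightarrow> ('c \<Rightarrow> 'c \<Rightarrow> 'c \<Rightarrow> bool) \<Rightarrow> ('c, 'v) ctx
    \<Rightarrow> ('c, 'v) trm \<Rightarrow> ('c, 'v) trm \<Rightarrow> bool"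
  for enc dec chi Ax Rl where
  ok_nil: "ctx_ok enc dec chi Ax Rl []"
| ok_cons: "ctx_ok enc dec chi Ax Rl \<Gamma> \<Longrightarrow> typing enc dec chi Ax Rl \<Gamma> A (Const s)
    \<Longrightarrow> x \<notin> set (map fst \<Gamma>) \<Longrightarrow> ctx_ok enc dec chi Ax Rl ((x, A) # \<Gamma>)"
| ty_sort: "ctx_ok enc dec chi Ax Rl \<Gamma> \<Longrightarrow> Ax s1 s2
    \<Longrightarrow> typing enc dec chi Ax Rl \<Gamma> (Const s1) (Const s2)"
| ty_var: "ctx_ok enc dec chi Ax Rl \<Gamma> \<Longrightarrow> (x, A) \<in> set \<Gamma>
    \<Longrightarrow> typing enc dec chi Ax Rl \<Gamma> (Var x) A"
| ty_prod: "Rl s1 s2 s3 \<Longrightarrow> typing enc dec chi Ax Rl \<Gamma> A (Const s1)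
    \<Longrightarrow> (\<forall>y. y \<notin> set (map fst \<Gamma>) \<longrightarrow>
          typing enc dec chi Ax Rl ((y, A) # \<Gamma>) (usubst enc dec chi B x (Var y)) (Const s2))
    \<Longrightarrow> typing enc dec chi Ax Rl \<Gamma> (Pi x A B) (Const s3)"
| ty_abs: "Rl s1 s2 s3 \<Longrightarrow> typing enc dec chi Ax Rl \<Gamma> A (Const s1)
    \<Longrightarrow> (\<forall>z. z \<notin> set (map fst \<Gamma>) \<longrightarrow>
          typing enc dec chi Ax Rl ((z, A) # \<Gamma>) (usubst enc dec chi B y (Var z)) (Const s2))
    \<Longrightarrow> (\<forall>z. z \<notin> set (map fst \<Gamma>) \<longrightarrow>
          typing enc dec chi Ax Rl ((z, A) # \<Gamma>) (usubst enc dec chi M x (Var z))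
             (usubst enc dec chi B y (Var z)))
    \<Longrightarrow> typing enc dec chi Ax Rl \<Gamma> (Lam x A M) (Pi y A B)"
| ty_app: "typing enc dec chi Ax Rl \<Gamma> M (Pi x A B) \<Longrightarrow> typing enc dec chi Ax Rl \<Gamma> N A
    \<Longrightarrow> typing enc dec chi Ax Rl \<Gamma> (usubst enc dec chi B x N) (Const s)
    \<Longrightarrow> typing enc dec chi Ax Rl \<Gamma> (App M N) (usubst enc dec chi B x N)"
| ty_conv: "typing enc dec chi Ax Rl \<Gamma> M A \<Longrightarrow> betaconv enc dec chi A B
    \<Longrightarrow> typing enc dec chi Ax Rl \<Gamma> B (Const s)
    \<Longrightarrow> typing enc dec chi Ax Rl \<Gamma> M B"

end

theory Submission
  imports Defs
begin

text \<open>
  A variable renaming \<open>f\<close> maps a context \<open>\<Gamma>\<close> to a context \<open>\<Delta>\<close> if every declaration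
  \<open>u : C\<close> of \<open>\<Gamma>\<close> is matched by a declaration \<open>f u : C'\<close> of \<open>\<Delta>\<close> with \<open>C' =\<^sub>\<beta> C[f]\<close>, and
  \<open>C[f]\<close> is a type in \<open>\<Delta>\<close>. Typing is preserved along such maps, by induction on derivations:
  the binder rules quantify over all fresh names, so for a name \<open>w\<close> fresh in \<open>\<Delta>\<close> one picks
  \<open>z\<close> fresh for everything in sight and extends the map by \<open>z \<mapsto> w\<close>. The theorem
  is the instance \<open>f = id(x := y)\<close> from \<open>\<Gamma>, x:A\<close> to \<open>\<Gamma>, y:A\<close>; since substitution
  renames every binder, \<open>C[f]\<close> is only \<open>\<alpha>\<close>-equivalent to \<open>C\<close>, which the conversion rule absorbs.
\<close>

abbreviation fvs :: "('v \<Rightarrow> ('c, 'v) trm) \<Rightarrow> 'v list \<Rightarrow> 'v list" where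
  "fvs \<sigma> xs \<equiv> concat (map (\<lambda>u. fv (\<sigma> u)) xs)"

lemma equivclp_map:
  assumes "\<And>a b. r a b \<Longrightarrow> equivclp r (f a) (f b)" and "equivclp r a b"
  shows "equivclp r (f a) (f b)"
  using assms(2) by induction (metis assms(1) equivclp_refl equivclp_sym equivclp_trans)+

locale pts_syntax =
  fixes enc :: "'v \<Rightarrow> nat" and dec :: "nat \<Rightarrow> 'v" and chi :: "nat list \<Rightarrow> nat"
    and Ax :: "'c \<Rightarrow> 'c \<Rightarrow> bool" and Rl :: "'c \<Rightarrow> 'c \<Rightarrow> 'c \<Rightarrow> bool"
begin

abbreviation subst_app :: "('c, 'v) trm \<Rightarrow> ('v \<Rightarrow> ('c, 'v) trm) \<Rightarrow> ('c, 'v) trm"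
    (infixl \<open>\<bullet>\<close> 90) where
  "M \<bullet> \<sigma> \<equiv> subst enc dec chi M \<sigma>"

abbreviation usubst_app :: "('c, 'v) trm \<Rightarrow> 'v \<Rightarrow> ('c, 'v) trm \<Rightarrow> ('c, 'v) trm"
    (\<open>_[_ ::= _]\<close> [1000, 0, 0] 1000) where
  "M[x ::= N] \<equiv> usubst enc dec chi M x N"

abbreviation fresh_binder :: "('v \<Rightarrow> ('c, 'v) trm) \<Rightarrow> 'v \<Rightarrow> ('c, 'v) trm \<Rightarrow> 'v" where
  "fresh_binder \<sigma> x M \<equiv> Xfresh enc dec chi \<sigma> (removeAll x (fv M))"

abbreviation alpha_equiv :: "('c, 'v) trm \<Rightarrow> ('c, 'v) trm \<Rightarrow> bool" (infix \<open>=\<^sub>\<alpha>\<close> 50) where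
  "M =\<^sub>\<alpha> N \<equiv> alpha enc dec chi M N"

abbreviation beta_step :: "('c, 'v) trm \<Rightarrow> ('c, 'v) trm \<Rightarrow> bool" (infix \<open>\<rightarrow>\<^sub>\<beta>\<close> 50) where
  "M \<rightarrow>\<^sub>\<beta> N \<equiv> beta enc dec chi M N"

abbreviation beta_conv :: "('c, 'v) trm \<Rightarrow> ('c, 'v) trm \<Rightarrow> bool" (infix \<open>=\<^sub>\<beta>\<close> 50) where
  "M =\<^sub>\<beta> N \<equiv> betaconv enc dec chi M N"

abbreviation ctx_ok_app :: "('c, 'v) ctx \<Rightarrow> bool" (\<open>\<turnstile> _ ok\<close> [50] 50) where
  "\<turnstile> \<Gamma> ok \<equiv> ctx_ok enc dec chi Ax Rl \<Gamma>"

abbreviation typing_app :: "('c, 'v) ctx \<Rightarrow> ('c, 'v) trm \<Rightarrow> ('c, 'v) trm \<Rightarrow> bool"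
    (\<open>_ \<turnstile> _ : _\<close> [50, 50, 50] 50) where
  "\<Gamma> \<turnstile> M : B \<equiv> typing enc dec chi Ax Rl \<Gamma> M B"

lemma subst_cong: "\<forall>u\<in>set (fv M). \<sigma> u = \<tau> u \<Longrightarrow> M \<bullet> \<sigma> = M \<bullet> \<tau>"
proof (induction M arbitrary: \<sigma> \<tau>)
  case (Lam x A M)
  have m: "map (\<lambda>u. fv (\<sigma> u)) (removeAll x (fv M)) = map (\<lambda>u. fv (\<tau> u)) (removeAll x (fv M))"
    using Lam.prems by (intro map_cong) auto
  show ?case using Lam by (simp add: Let_def Xfresh_def m)
next
  case (Pi x A M)
  have m: "map (\<lambda>u. fv (\<sigma> u)) (removeAll x (fv M)) = map (\<lambda>u. fv (\<tau> u)) (removeAll x (fv M))"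
    using Pi.prems by (intro map_cong) auto
  show ?case using Pi by (simp add: Let_def Xfresh_def m)
qed auto

lemma betaconv_eq_equivclp: "betaconv enc dec chi = equivclp (\<lambda>M N. M =\<^sub>\<alpha> N \<or> M \<rightarrow>\<^sub>\<beta> N)"
  unfolding betaconv_def equivclp_def symclp_def by (metis (no_types))

lemma betaconv_refl: "M =\<^sub>\<beta> M"
  by (simp add: betaconv_eq_equivclp)

lemma betaconv_trans [trans]: "M =\<^sub>\<beta> N \<Longrightarrow> N =\<^sub>\<beta> P \<Longrightarrow> M =\<^sub>\<beta> P"
  unfolding betaconv_eq_equivclp by (rule equivclp_trans)

lemma alpha_imp_betaconv: "M =\<^sub>\<alpha> N \<Longrightarrow> M =\<^sub>\<beta> N"
  by (auto simp: betaconv_eq_equivclp)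

lemma beta_imp_betaconv: "M \<rightarrow>\<^sub>\<beta> N \<Longrightarrow> M =\<^sub>\<beta> N"
  by (auto simp: betaconv_eq_equivclp)

lemma betaconv_map:
  assumes "\<And>M N. M =\<^sub>\<alpha> N \<Longrightarrow> F M =\<^sub>\<beta> F N" and "\<And>M N. M \<rightarrow>\<^sub>\<beta> N \<Longrightarrow> F M =\<^sub>\<beta> F N"
    and "M =\<^sub>\<beta> N"
  shows "F M =\<^sub>\<beta> F N"
  using equivclp_map[of "\<lambda>M N. M =\<^sub>\<alpha> N \<or> M \<rightarrow>\<^sub>\<beta> N" F] assms
  unfolding betaconv_eq_equivclp by blast

lemma typing_imp_ctx_ok: "\<Gamma> \<turnstile> M : B \<Longrightarrow> \<turnstile> \<Gamma> ok"
  by (induction rule: ctx_ok_typing.inducts(2)[where ?P1.0 = "\<lambda>_. True"]) blast+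

lemma typing_weaken: "\<Gamma> \<turnstile> M : B \<Longrightarrow> \<turnstile> \<Gamma>' ok \<Longrightarrow> set \<Gamma> \<subseteq> set \<Gamma>' \<Longrightarrow> \<Gamma>' \<turnstile> M : B"
proof (induction arbitrary: \<Gamma>' rule: ctx_ok_typing.inducts(2)[where ?P1.0 = "\<lambda>_. True"])
  case (ty_prod s1 s2 s3 \<Gamma> A B x)
  then have A: "\<Gamma>' \<turnstile> A : Const s1" by blast
  have "(y, A) # \<Gamma>' \<turnstile> B[x ::= Var y] : Const s2" if y: "y \<notin> set (map fst \<Gamma>')" for y
  proof -
    have "y \<notin> set (map fst \<Gamma>)" using y ty_prod.prems(2) by auto
    then show ?thesis
      using spec[OF ty_prod(4), of y] ty_prod.prems(2)
        ctx_ok_typing.ok_cons[OF ty_prod.prems(1) A y]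
      by (simp add: subset_insertI2)
  qed
  with ty_prod.hyps(1) A show ?case by (blast intro: ctx_ok_typing.ty_prod)
next
  case (ty_abs s1 s2 s3 \<Gamma> A B y M x)
  then have A: "\<Gamma>' \<turnstile> A : Const s1" by blast
  have "(z, A) # \<Gamma>' \<turnstile> B[y ::= Var z] : Const s2 \<and> (z, A) # \<Gamma>' \<turnstile> M[x ::= Var z] : B[y ::= Var z]"
    if z: "z \<notin> set (map fst \<Gamma>')" for z
  proof -
    have "z \<notin> set (map fst \<Gamma>)" using z ty_abs.prems(2) by auto
    then show ?thesis
      using spec[OF ty_abs(4), of z] spec[OF ty_abs(5), of z] ty_abs.prems(2)
        ctx_ok_typing.ok_cons[OF ty_abs.prems(1) A z] by (simp add: subset_insertI2)
  qed
  with ty_abs.hyps(1) A show ?case by (blast intro: ctx_ok_typing.ty_abs)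
qed (blast intro: ctx_ok_typing.intros)+

end

lemma removeAll_fvs_update:
  assumes "y \<notin> set (fvs \<sigma> (removeAll x xs))"
  shows "removeAll y (fvs (\<sigma>(x := Var y)) xs) = fvs \<sigma> (removeAll x xs)"
  using assms by (induction xs) auto

locale pts = pts_syntax enc dec chi Ax Rl
  for enc :: "'v \<Rightarrow> nat" and dec :: "nat \<Rightarrow> 'v" and chi :: "nat list \<Rightarrow> nat"
    and Ax :: "'c \<Rightarrow> 'c \<Rightarrow> bool" and Rl :: "'c \<Rightarrow> 'c \<Rightarrow> 'c \<Rightarrow> bool" +
  assumes var_setup: "var_setup enc dec chi"
begin

lemma Xfresh_notin: "Xfresh enc dec chi \<sigma> xs \<notin> set (fvs \<sigma> xs)"
proof
  let ?ns = "map enc (fvs \<sigma> xs)"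
  assume "Xfresh enc dec chi \<sigma> xs \<in> set (fvs \<sigma> xs)"
  then have "enc (dec (chi ?ns)) \<in> set ?ns" by (simp add: Xfresh_def Xfresh'_def)
  with var_setup show False unfolding var_setup_def by metis
qed

lemma fresh_binder_notin: "fresh_binder \<sigma> x M \<notin> set (fvs \<sigma> (removeAll x (fv M)))"
  by (rule Xfresh_notin)

lemma fresh_binder_renaming: "fresh_binder (Var \<circ> f) x M \<notin> f ` set (removeAll x (fv M))"
  using fresh_binder_notin[of "Var \<circ> f" x M] by (simp add: concat_map_singleton)

lemma exists_fresh: "\<exists>z :: 'v. z \<notin> set xs"
  using Xfresh_notin[of "Var :: 'v \<Rightarrow> ('c, 'v) trm" xs] by (auto simp: concat_map_singleton)

lemma fv_subst: "fv (M \<bullet> \<sigma>) = fvs \<sigma> (fv M)"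
proof (induction M arbitrary: \<sigma>)
  case (Lam x A M)
  then show ?case
    using removeAll_fvs_update[OF fresh_binder_notin[of \<sigma> x M]] by (simp add: Let_def)
next
  case (Pi x A M)
  then show ?case
    using removeAll_fvs_update[OF fresh_binder_notin[of \<sigma> x M]] by (simp add: Let_def)
qed simp_all

lemma fvs_fvs: "fvs \<tau> (fvs \<sigma> xs) = fvs (\<lambda>u. \<sigma> u \<bullet> \<tau>) xs"
  by (induction xs) (simp_all add: fv_subst)

lemma subst_subst_binder:
  fixes x :: 'v and M :: "('c, 'v) trm" and \<sigma> \<tau> :: "'v \<Rightarrow> ('c, 'v) trm"
  defines "x1 \<equiv> fresh_binder \<sigma> x M" and "x2 \<equiv> fresh_binder (\<lambda>u. \<sigma> u \<bullet> \<tau>) x M"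
  assumes IH: "\<And>\<sigma> \<tau>. M \<bullet> \<sigma> \<bullet> \<tau> = M \<bullet> (\<lambda>u. \<sigma> u \<bullet> \<tau>)"
  shows "fresh_binder \<tau> x1 (M \<bullet> \<sigma>(x := Var x1)) = x2"
    and "M \<bullet> \<sigma>(x := Var x1) \<bullet> \<tau>(x1 := Var x2) = M \<bullet> (\<lambda>u. \<sigma> u \<bullet> \<tau>)(x := Var x2)"
proof -
  have x1: "x1 \<notin> set (fvs \<sigma> (removeAll x (fv M)))"
    unfolding x1_def by (rule Xfresh_notin)
  then have "removeAll x1 (fv (M \<bullet> \<sigma>(x := Var x1))) = fvs \<sigma> (removeAll x (fv M))"
    unfolding fv_subst by (rule removeAll_fvs_update)
  then show "fresh_binder \<tau> x1 (M \<bullet> \<sigma>(x := Var x1)) = x2"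
    unfolding x2_def Xfresh_def by (simp only: fvs_fvs)
  show "M \<bullet> \<sigma>(x := Var x1) \<bullet> \<tau>(x1 := Var x2) = M \<bullet> (\<lambda>u. \<sigma> u \<bullet> \<tau>)(x := Var x2)"
    unfolding IH
  proof (rule subst_cong, intro ballI)
    fix u assume u: "u \<in> set (fv M)"
    show "(\<sigma>(x := Var x1)) u \<bullet> \<tau>(x1 := Var x2) = ((\<lambda>u. \<sigma> u \<bullet> \<tau>)(x := Var x2)) u"
    proof (cases "u = x")
      case False
      with u x1 have "x1 \<notin> set (fv (\<sigma> u))" by auto
      with False show ?thesis by (auto intro: subst_cong)
    qed simp
  qed
qed

lemma subst_subst: "M \<bullet> \<sigma> \<bullet> \<tau> = M \<bullet> (\<lambda>u. \<sigma> u \<bullet> \<tau>)"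
proof (induction M arbitrary: \<sigma> \<tau>)
  case (Lam x A M)
  show ?case by (simp only: subst.simps Let_def subst_subst_binder[OF Lam.IH(2)] Lam.IH(1))
next
  case (Pi x A M)
  show ?case by (simp only: subst.simps Let_def subst_subst_binder[OF Pi.IH(2)] Pi.IH(1))
qed simp_all

lemma subst_usubst: "M[x ::= N] \<bullet> \<sigma> = M \<bullet> \<sigma>(x := N \<bullet> \<sigma>)"
  unfolding usubst_def subst_subst by (rule subst_cong) auto

lemma usubst_Var_subst:
  "y \<notin> set (removeAll x (fv M)) \<Longrightarrow> M[x ::= Var y] \<bullet> \<sigma>(y := P) = M \<bullet> \<sigma>(x := P)"
  unfolding usubst_def subst_subst by (rule subst_cong) auto

lemma usubst_renamed_binder:
  "x' \<notin> f ` set (removeAll x (fv M))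
    \<Longrightarrow> (M \<bullet> (Var \<circ> f)(x := Var x'))[x' ::= N] = M \<bullet> (Var \<circ> f)(x := N)"
  unfolding usubst_def subst_subst by (rule subst_cong) auto

lemma fv_usubst_Var:
  "y \<notin> set (removeAll x (fv M)) \<Longrightarrow> removeAll y (fv (M[x ::= Var y])) = removeAll x (fv M)"
  using removeAll_fvs_update[of y Var x "fv M"]
  by (simp add: usubst_def fv_subst concat_map_singleton)

lemma set_fv_usubst_Var: "set (removeAll x (fv M)) \<subseteq> set (fv (M[x ::= Var y]))"
  by (auto simp: usubst_def fv_subst)

lemma alpha_LamI:
  "A =\<^sub>\<alpha> A' \<Longrightarrow> (\<And>y. y \<notin> set (fv M @ fv M') \<Longrightarrow> M[x ::= Var y] = M'[x' ::= Var y])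
    \<Longrightarrow> Lam x A M =\<^sub>\<alpha> Lam x' A' M'"
  using exists_fresh[of "fv M @ fv M'"] by (auto intro: alpha_lam)

lemma alpha_PiI:
  "A =\<^sub>\<alpha> A' \<Longrightarrow> (\<And>y. y \<notin> set (fv M @ fv M') \<Longrightarrow> M[x ::= Var y] = M'[x' ::= Var y])
    \<Longrightarrow> Pi x A M =\<^sub>\<alpha> Pi x' A' M'"
  using exists_fresh[of "fv M @ fv M'"] by (auto intro: alpha_pi)

lemma alpha_refl: "M =\<^sub>\<alpha> M"
  by (induction M) (auto intro: alpha.intros alpha_LamI alpha_PiI)

lemma alpha_binder_fv:
  "y \<notin> set (removeAll x (fv M)) \<Longrightarrow> y \<notin> set (removeAll x' (fv M')) \<Longrightarrow> M[x ::= Var y] = M'[x' ::= Var y]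
    \<Longrightarrow> removeAll x (fv M) = removeAll x' (fv M')"
  by (metis fv_usubst_Var)

lemma alpha_binder_subst:
  "y \<notin> set (removeAll x (fv M)) \<Longrightarrow> y \<notin> set (removeAll x' (fv M')) \<Longrightarrow> M[x ::= Var y] = M'[x' ::= Var y]
    \<Longrightarrow> M \<bullet> \<sigma>(x := P) = M' \<bullet> \<sigma>(x' := P)"
  by (metis usubst_Var_subst)

text \<open>Substitution picks every bound name from the free variables alone, so it cannot tell
  \<open>\<alpha>\<close>-equivalent terms apart.\<close>

lemma alpha_subst: "M =\<^sub>\<alpha> N \<Longrightarrow> M \<bullet> \<sigma> = N \<bullet> \<sigma>"
proof (induction arbitrary: \<sigma> rule: alpha.induct)
  case (alpha_lam A A' y x M x' M')
  show ?case
    by (simp only: subst.simps Let_def alpha_lam.IH alpha_binder_fv[OF alpha_lam.hyps(2-4)]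
        alpha_binder_subst[OF alpha_lam.hyps(2-4)])
next
  case (alpha_pi A A' y x M x' M')
  show ?case
    by (simp only: subst.simps Let_def alpha_pi.IH alpha_binder_fv[OF alpha_pi.hyps(2-4)]
        alpha_binder_subst[OF alpha_pi.hyps(2-4)])
qed simp_all

lemma alpha_subst_Var: "M =\<^sub>\<alpha> M \<bullet> Var"
proof (induction M)
  case (Lam x A M)
  let ?x' = "fresh_binder Var x M"
  have "M[x ::= Var y] = (M \<bullet> Var(x := Var ?x'))[?x' ::= Var y]" for y
    using usubst_renamed_binder[of ?x' id x M "Var y"] fresh_binder_renaming[of id x M]
    by (simp add: usubst_def)
  with Lam.IH show ?case by (auto simp: Let_def intro: alpha_LamI)
next
  case (Pi x A M)
  let ?x' = "fresh_binder Var x M"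
  have "M[x ::= Var y] = (M \<bullet> Var(x := Var ?x'))[?x' ::= Var y]" for y
    using usubst_renamed_binder[of ?x' id x M "Var y"] fresh_binder_renaming[of id x M]
    by (simp add: usubst_def)
  with Pi.IH show ?case by (auto simp: Let_def intro: alpha_PiI)
qed (auto intro: alpha.intros)

lemma alpha_Lam_body: "M =\<^sub>\<alpha> N \<Longrightarrow> Lam x A M =\<^sub>\<alpha> Lam x A N"
  by (rule alpha_LamI[OF alpha_refl]) (simp add: usubst_def alpha_subst)

lemma alpha_Pi_body: "M =\<^sub>\<alpha> N \<Longrightarrow> Pi x A M =\<^sub>\<alpha> Pi x A N"
  by (rule alpha_PiI[OF alpha_refl]) (simp add: usubst_def alpha_subst)

lemma betaconv_Lam: "A =\<^sub>\<beta> A' \<Longrightarrow> M =\<^sub>\<beta> M' \<Longrightarrow> Lam x A M =\<^sub>\<beta> Lam x A' M'"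
proof -
  assume A: "A =\<^sub>\<beta> A'" and M: "M =\<^sub>\<beta> M'"
  have "Lam x A M =\<^sub>\<beta> Lam x A' M"
    using A by (rule betaconv_map[where F = "\<lambda>P. Lam x P M", rotated 2])
      (auto intro: alpha_imp_betaconv beta_imp_betaconv alpha_LamI alpha_refl beta.intros)
  also have "Lam x A' M =\<^sub>\<beta> Lam x A' M'"
    using M by (rule betaconv_map[where F = "Lam x A'", rotated 2])
      (auto intro: alpha_imp_betaconv beta_imp_betaconv alpha_Lam_body beta.intros)
  finally show ?thesis .
qed

lemma betaconv_Pi: "A =\<^sub>\<beta> A' \<Longrightarrow> M =\<^sub>\<beta> M' \<Longrightarrow> Pi x A M =\<^sub>\<beta> Pi x A' M'"
proof -
  assume A: "A =\<^sub>\<beta> A'" and M: "M =\<^sub>\<beta> M'"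
  have "Pi x A M =\<^sub>\<beta> Pi x A' M"
    using A by (rule betaconv_map[where F = "\<lambda>P. Pi x P M", rotated 2])
      (auto intro: alpha_imp_betaconv beta_imp_betaconv alpha_PiI alpha_refl beta.intros)
  also have "Pi x A' M =\<^sub>\<beta> Pi x A' M'"
    using M by (rule betaconv_map[where F = "Pi x A'", rotated 2])
      (auto intro: alpha_imp_betaconv beta_imp_betaconv alpha_Pi_body beta.intros)
  finally show ?thesis .
qed

lemma betaconv_App: "M =\<^sub>\<beta> M' \<Longrightarrow> N =\<^sub>\<beta> N' \<Longrightarrow> App M N =\<^sub>\<beta> App M' N'"
proof -
  assume M: "M =\<^sub>\<beta> M'" and N: "N =\<^sub>\<beta> N'"
  have "App M N =\<^sub>\<beta> App M' N"
    using M by (rule betaconv_map[where F = "\<lambda>P. App P N", rotated 2])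
      (auto intro: alpha_imp_betaconv beta_imp_betaconv alpha.intros alpha_refl beta.intros)
  also have "App M' N =\<^sub>\<beta> App M' N'"
    using N by (rule betaconv_map[where F = "App M'", rotated 2])
      (auto intro: alpha_imp_betaconv beta_imp_betaconv alpha.intros alpha_refl beta.intros)
  finally show ?thesis .
qed

lemma beta_fv: "M \<rightarrow>\<^sub>\<beta> N \<Longrightarrow> set (fv N) \<subseteq> set (fv M)"
  by (induction rule: beta.induct) (auto simp: usubst_def fv_subst split: if_splits)

lemma usubst_renamed_binders_eq:
  assumes "x1 \<notin> f ` set (removeAll x (fv M))" and "x2 \<notin> f ` set (removeAll x (fv M))"
  shows "(M \<bullet> (Var \<circ> f)(x := Var x1))[x1 ::= N] = (M \<bullet> (Var \<circ> f)(x := Var x2))[x2 ::= N]"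
  using assms by (metis usubst_renamed_binder)

lemma beta_subst_renaming: "M \<rightarrow>\<^sub>\<beta> N \<Longrightarrow> M \<bullet> (Var \<circ> f) =\<^sub>\<beta> N \<bullet> (Var \<circ> f)"
proof (induction arbitrary: f rule: beta.induct)
  case (beta_contr x A M N)
  let ?x1 = "fresh_binder (Var \<circ> f) x M"
  have "App (Lam x A M) N \<bullet> (Var \<circ> f) \<rightarrow>\<^sub>\<beta> (M \<bullet> (Var \<circ> f)(x := Var ?x1))[?x1 ::= N \<bullet> (Var \<circ> f)]"
    unfolding subst.simps Let_def by (rule beta.beta_contr)
  also have "(M \<bullet> (Var \<circ> f)(x := Var ?x1))[?x1 ::= N \<bullet> (Var \<circ> f)] = M[x ::= N] \<bullet> (Var \<circ> f)"
    by (simp only: usubst_renamed_binder[OF fresh_binder_renaming] subst_usubst)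
  finally show ?case by (rule beta_imp_betaconv)
next
  case (beta_lam_body M M' x A)
  let ?x1 = "fresh_binder (Var \<circ> f) x M"
  have "Lam x A M \<bullet> (Var \<circ> f) =\<^sub>\<beta> Lam ?x1 (A \<bullet> (Var \<circ> f)) (M' \<bullet> (Var \<circ> f)(x := Var ?x1))"
    unfolding subst.simps Let_def
    by (rule betaconv_Lam[OF betaconv_refl
          beta_lam_body.IH[of "f(x := ?x1)", unfolded fun_upd_comp]])
  also have "Lam ?x1 (A \<bullet> (Var \<circ> f)) (M' \<bullet> (Var \<circ> f)(x := Var ?x1)) =\<^sub>\<beta> Lam x A M' \<bullet> (Var \<circ> f)"
    using fresh_binder_renaming[of f x M] fresh_binder_renaming[of f x M']
      beta_fv[OF beta_lam_body.hyps]
    by (auto simp: Let_def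
        intro!: alpha_imp_betaconv alpha_LamI[OF alpha_refl] usubst_renamed_binders_eq)
  finally show ?case .
next
  case (beta_pi_body M M' x A)
  let ?x1 = "fresh_binder (Var \<circ> f) x M"
  have "Pi x A M \<bullet> (Var \<circ> f) =\<^sub>\<beta> Pi ?x1 (A \<bullet> (Var \<circ> f)) (M' \<bullet> (Var \<circ> f)(x := Var ?x1))"
    unfolding subst.simps Let_def
    by (rule betaconv_Pi[OF betaconv_refl
          beta_pi_body.IH[of "f(x := ?x1)", unfolded fun_upd_comp]])
  also have "Pi ?x1 (A \<bullet> (Var \<circ> f)) (M' \<bullet> (Var \<circ> f)(x := Var ?x1)) =\<^sub>\<beta> Pi x A M' \<bullet> (Var \<circ> f)"
    using fresh_binder_renaming[of f x M] fresh_binder_renaming[of f x M']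
      beta_fv[OF beta_pi_body.hyps]
    by (auto simp: Let_def
        intro!: alpha_imp_betaconv alpha_PiI[OF alpha_refl] usubst_renamed_binders_eq)
  finally show ?case .
qed (simp_all add: Let_def betaconv_Lam betaconv_Pi betaconv_App betaconv_refl)

lemma betaconv_subst_renaming: "M =\<^sub>\<beta> N \<Longrightarrow> M \<bullet> (Var \<circ> f) =\<^sub>\<beta> N \<bullet> (Var \<circ> f)"
  by (rule betaconv_map[where F = "\<lambda>M. M \<bullet> (Var \<circ> f)", rotated 2])
    (simp_all add: alpha_subst betaconv_refl beta_subst_renaming)

lemma fv_binder_subset_dom:
  assumes "\<And>y. y \<notin> set (map fst \<Gamma>) \<Longrightarrow> set (fv (B[x ::= Var y])) \<subseteq> insert y (set (map fst \<Gamma>))"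
  shows "set (removeAll x (fv B)) \<subseteq> set (map fst \<Gamma>)"
proof
  fix u assume u: "u \<in> set (removeAll x (fv B))"
  obtain y where y: "y \<notin> set (u # map fst \<Gamma>)" using exists_fresh by blast
  then have "set (fv (B[x ::= Var y])) \<subseteq> insert y (set (map fst \<Gamma>))" by (intro assms) simp
  with u y set_fv_usubst_Var show "u \<in> set (map fst \<Gamma>)" by fastforce
qed

lemma fv_subset_dom:
  shows "\<turnstile> \<Gamma> ok \<Longrightarrow> \<forall>u C. (u, C) \<in> set \<Gamma> \<longrightarrow> set (fv C) \<subseteq> set (map fst \<Gamma>)"
    and "\<Gamma> \<turnstile> M : B \<Longrightarrow> set (fv M) \<subseteq> set (map fst \<Gamma>)"
proof (induction rule: ctx_ok_typing.inducts)
  case (ty_prod s1 s2 s3 \<Gamma> A B x)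
  then have "set (removeAll x (fv B)) \<subseteq> set (map fst \<Gamma>)"
    by (intro fv_binder_subset_dom) simp
  with ty_prod show ?case by simp
next
  case (ty_abs s1 s2 s3 \<Gamma> A B y M x)
  then have "set (removeAll x (fv M)) \<subseteq> set (map fst \<Gamma>)"
    by (intro fv_binder_subset_dom) simp
  with ty_abs show ?case by simp
next
  case (ty_var \<Gamma> x A)
  then show ?case by (auto intro: image_eqI[of x fst "(x, A)"])
qed auto

text \<open>The typability of \<open>C \<bullet> (Var \<circ> f)\<close> is what the conversion rule needs at variables.\<close>

definition ctx_renaming :: "('v \<Rightarrow> 'v) \<Rightarrow> ('c, 'v) ctx \<Rightarrow> ('c, 'v) ctx \<Rightarrow> bool" where
  "ctx_renaming f \<Gamma> \<Delta> \<longleftrightarrow> \<turnstile> \<Delta> ok \<and>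
     (\<forall>u C. (u, C) \<in> set \<Gamma> \<longrightarrow> (\<exists>C'. (f u, C') \<in> set \<Delta> \<and> C' =\<^sub>\<beta> C \<bullet> (Var \<circ> f))
                                  \<and> (\<exists>s. \<Delta> \<turnstile> C \<bullet> (Var \<circ> f) : Const s))"

lemma ctx_renaming_Cons:
  assumes f: "ctx_renaming f \<Gamma> \<Delta>" and A: "\<Delta> \<turnstile> A \<bullet> (Var \<circ> f) : Const s"
    and w: "w \<notin> set (map fst \<Delta>)" and z: "z \<notin> set (map fst \<Gamma>)" "z \<notin> set (fv A)"
    and z_types: "\<forall>u C. (u, C) \<in> set \<Gamma> \<longrightarrow> z \<notin> set (fv C)"
  shows "ctx_renaming (f(z := w)) ((z, A) # \<Gamma>) ((w, A \<bullet> (Var \<circ> f)) # \<Delta>)"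
proof -
  let ?\<Delta>' = "(w, A \<bullet> (Var \<circ> f)) # \<Delta>"
  have ok: "\<turnstile> ?\<Delta>' ok"
    using f A w by (auto simp: ctx_renaming_def intro: ctx_ok_typing.ok_cons)
  have weaken: "?\<Delta>' \<turnstile> N : T" if "\<Delta> \<turnstile> N : T" for N T
    using that ok by (rule typing_weaken) auto
  have unchanged: "C \<bullet> (Var \<circ> f(z := w)) = C \<bullet> (Var \<circ> f)" if "z \<notin> set (fv C)" for C
    using that by (intro subst_cong) auto
  have "u \<noteq> z" if "(u, C) \<in> set \<Gamma>" for u C
    using that z(1) by force
  with f A z(2) z_types show ?thesis
    unfolding ctx_renaming_def by (fastforce simp: ok unchanged betaconv_refl intro: weaken)
qed

lemma ctx_renaming_extend:
  assumes "ctx_renaming f \<Gamma> \<Delta>" and "\<Delta> \<turnstile> A \<bullet> (Var \<circ> f) : Const s" and "w \<notin> set (map fst \<Delta>)"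
  obtains z where "z \<notin> set xs" and "z \<notin> set (map fst \<Gamma>)"
    and "ctx_renaming (f(z := w)) ((z, A) # \<Gamma>) ((w, A \<bullet> (Var \<circ> f)) # \<Delta>)"
proof -
  obtain z where z: "z \<notin> set (xs @ map fst \<Gamma> @ fv A @ concat (map (fv \<circ> snd) \<Gamma>))"
    using exists_fresh by blast
  then have "\<forall>u C. (u, C) \<in> set \<Gamma> \<longrightarrow> z \<notin> set (fv C)" by force
  with z assms show ?thesis by (intro that[of z] ctx_renaming_Cons) auto
qed

lemma usubst_Var_renaming:
  assumes "z \<notin> set (removeAll x (fv B))"
  shows "B[x ::= Var z] \<bullet> (Var \<circ> f(z := w))
    = (B \<bullet> (Var \<circ> f)(x := Var (fresh_binder (Var \<circ> f) x B)))[fresh_binder (Var \<circ> f) x B ::= Var w]"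
  by (simp only: fun_upd_comp usubst_Var_subst[OF assms]
      usubst_renamed_binder[OF fresh_binder_renaming])

lemma usubst_Const: "(Const k)[x ::= N] = Const k"
  by (simp add: usubst_def)

lemma typing_renaming_body:
  assumes f: "ctx_renaming f \<Gamma> \<Delta>" and A: "\<Delta> \<turnstile> A \<bullet> (Var \<circ> f) : Const s"
    and w: "w \<notin> set (map fst \<Delta>)"
    and IH: "\<And>z \<Delta>' g. z \<notin> set (map fst \<Gamma>) \<Longrightarrow> ctx_renaming g ((z, A) # \<Gamma>) \<Delta>'
      \<Longrightarrow> \<Delta>' \<turnstile> M[x ::= Var z] \<bullet> (Var \<circ> g) : T[y ::= Var z] \<bullet> (Var \<circ> g)"
  defines "x1 \<equiv> fresh_binder (Var \<circ> f) x M" and "y1 \<equiv> fresh_binder (Var \<circ> f) y T"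
  shows "(w, A \<bullet> (Var \<circ> f)) # \<Delta> \<turnstile> (M \<bullet> (Var \<circ> f)(x := Var x1))[x1 ::= Var w]
                                   : (T \<bullet> (Var \<circ> f)(y := Var y1))[y1 ::= Var w]"
proof -
  obtain z where z: "z \<notin> set (fv M @ fv T)" "z \<notin> set (map fst \<Gamma>)"
    and f': "ctx_renaming (f(z := w)) ((z, A) # \<Gamma>) ((w, A \<bullet> (Var \<circ> f)) # \<Delta>)"
    using ctx_renaming_extend[OF f A w] .
  have "(w, A \<bullet> (Var \<circ> f)) # \<Delta> \<turnstile> M[x ::= Var z] \<bullet> (Var \<circ> f(z := w))
                                   : T[y ::= Var z] \<bullet> (Var \<circ> f(z := w))"
    using IH[OF z(2) f'] .
  moreover have "z \<notin> set (removeAll x (fv M))" "z \<notin> set (removeAll y (fv T))"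
    using z(1) by auto
  ultimately show ?thesis unfolding x1_def y1_def by (simp only: usubst_Var_renaming simp_thms)
qed

lemma typing_renaming:
  "\<Gamma> \<turnstile> M : B \<Longrightarrow> ctx_renaming f \<Gamma> \<Delta> \<Longrightarrow> \<Delta> \<turnstile> M \<bullet> (Var \<circ> f) : B \<bullet> (Var \<circ> f)"
  \<comment> \<open>\<open>induct\<close>, not \<open>induction\<close>: the latter eta-expands \<open>Var \<circ> f\<close> in the hypotheses.\<close>
proof (induct arbitrary: \<Delta> f rule: ctx_ok_typing.inducts(2)[where ?P1.0 = "\<lambda>_. True"])
  case (ty_sort \<Gamma> s1 s2)
  then show ?case by (auto simp: ctx_renaming_def intro: ctx_ok_typing.ty_sort)
next
  case (ty_var \<Gamma> x A)
  then obtain C' s where "(f x, C') \<in> set \<Delta>" "C' =\<^sub>\<beta> A \<bullet> (Var \<circ> f)" "\<Delta> \<turnstile> A \<bullet> (Var \<circ> f) : Const s"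
    and "\<turnstile> \<Delta> ok"
    unfolding ctx_renaming_def by blast
  moreover have "Var x \<bullet> (Var \<circ> f) = Var (f x)" by simp
  ultimately show ?case by (metis ctx_ok_typing.ty_var ctx_ok_typing.ty_conv)
next
  case (ty_prod s1 s2 s3 \<Gamma> A B x)
  have A: "\<Delta> \<turnstile> A \<bullet> (Var \<circ> f) : Const s1"
    using ty_prod.hyps(3)[OF ty_prod.prems] by (simp only: subst.simps)
  have "\<Delta>' \<turnstile> B[x ::= Var z] \<bullet> (Var \<circ> g) : (Const s2)[x ::= Var z] \<bullet> (Var \<circ> g)"
    if "z \<notin> set (map fst \<Gamma>)" "ctx_renaming g ((z, A) # \<Gamma>) \<Delta>'" for z \<Delta>' g
    using ty_prod.hyps(4) that by (metis usubst_Const subst.simps(1))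
  from typing_renaming_body[OF ty_prod.prems A _ this] ty_prod.hyps(1) A show ?case
    unfolding subst.simps Let_def usubst_Const by (blast intro: ctx_ok_typing.ty_prod)
next
  case (ty_abs s1 s2 s3 \<Gamma> A B y M x)
  have A: "\<Delta> \<turnstile> A \<bullet> (Var \<circ> f) : Const s1"
    using ty_abs.hyps(3)[OF ty_abs.prems] by (simp only: subst.simps)
  have "\<Delta>' \<turnstile> B[y ::= Var z] \<bullet> (Var \<circ> g) : (Const s2)[y ::= Var z] \<bullet> (Var \<circ> g)"
    and "\<Delta>' \<turnstile> M[x ::= Var z] \<bullet> (Var \<circ> g) : B[y ::= Var z] \<bullet> (Var \<circ> g)"
    if "z \<notin> set (map fst \<Gamma>)" "ctx_renaming g ((z, A) # \<Gamma>) \<Delta>'" for z \<Delta>' g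
    using ty_abs.hyps(4,5) that by (metis usubst_Const subst.simps(1))+
  from typing_renaming_body[OF ty_abs.prems A _ this(1)]
    typing_renaming_body[OF ty_abs.prems A _ this(2)] ty_abs.hyps(1) A show ?case
    unfolding subst.simps Let_def usubst_Const by (blast intro: ctx_ok_typing.ty_abs)
next
  case (ty_app \<Gamma> M x A B N s)
  let ?x1 = "fresh_binder (Var \<circ> f) x B"
  have M: "\<Delta> \<turnstile> M \<bullet> (Var \<circ> f) : Pi ?x1 (A \<bullet> (Var \<circ> f)) (B \<bullet> (Var \<circ> f)(x := Var ?x1))"
    using ty_app.hyps(2)[OF ty_app.prems] by (simp only: subst.simps Let_def)
  have B: "\<Delta> \<turnstile> B[x ::= N] \<bullet> (Var \<circ> f) : Const s"
    using ty_app.hyps(6)[OF ty_app.prems] by (simp only: subst.simps)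
  have eq: "B[x ::= N] \<bullet> (Var \<circ> f) = (B \<bullet> (Var \<circ> f)(x := Var ?x1))[?x1 ::= N \<bullet> (Var \<circ> f)]"
    by (simp only: subst_usubst usubst_renamed_binder[OF fresh_binder_renaming])
  have "\<Delta> \<turnstile> App (M \<bullet> (Var \<circ> f)) (N \<bullet> (Var \<circ> f)) : B[x ::= N] \<bullet> (Var \<circ> f)"
    unfolding eq by (rule ctx_ok_typing.ty_app[OF M ty_app.hyps(4)[OF ty_app.prems] B[unfolded eq]])
  then show ?case by (simp only: subst.simps)
next
  case (ty_conv \<Gamma> M A B s)
  then show ?case by (metis ctx_ok_typing.ty_conv betaconv_subst_renaming subst.simps(1))
qed simp_all

lemma ctx_types_subst_Var: "\<turnstile> \<Gamma> ok \<Longrightarrow> (u, C) \<in> set \<Gamma> \<Longrightarrow> \<exists>s. \<Gamma> \<turnstile> C \<bullet> Var : Const s"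
proof (induction \<Gamma> arbitrary: u C)
  case (Cons p \<Gamma>)
  obtain u0 C0 where p: "p = (u0, C0)" by fastforce
  with Cons.prems(1) obtain s0 where ok: "\<turnstile> \<Gamma> ok" and C0: "\<Gamma> \<turnstile> C0 : Const s0"
    by (cases rule: ctx_ok.cases) auto
  have "ctx_renaming id \<Gamma> \<Gamma>"
    using ok Cons.IH[OF ok]
    by (auto simp: ctx_renaming_def intro: alpha_imp_betaconv alpha_subst_Var)
  from typing_renaming[OF C0 this] have "\<Gamma> \<turnstile> C0 \<bullet> Var : Const s0" by simp
  with Cons.IH[OF ok] Cons.prems p have "\<exists>s. \<Gamma> \<turnstile> C \<bullet> Var : Const s" by auto
  then show ?case using typing_weaken[OF _ Cons.prems(1)] by auto
qed simp

lemma ctx_renaming_rename_head: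
  assumes x: "\<turnstile> (x, A) # \<Gamma> ok" and y: "\<turnstile> (y, A) # \<Gamma> ok"
  shows "ctx_renaming (id(x := y)) ((x, A) # \<Gamma>) ((y, A) # \<Gamma>)"
proof -
  from x obtain s where ok: "\<turnstile> \<Gamma> ok" and A: "\<Gamma> \<turnstile> A : Const s" and x_dom: "x \<notin> set (map fst \<Gamma>)"
    by (cases rule: ctx_ok.cases) auto
  have renamed: "((id(x := y)) u, C) \<in> set ((y, A) # \<Gamma>) \<and> C \<bullet> (Var \<circ> id(x := y)) = C \<bullet> Var"
    if uC: "(u, C) \<in> set ((x, A) # \<Gamma>)" for u C
  proof -
    have "x \<notin> set (fv C)" using uC x_dom fv_subset_dom(1)[OF ok] fv_subset_dom(2)[OF A] by force
    then have "C \<bullet> (Var \<circ> id(x := y)) = C \<bullet> Var" by (intro subst_cong) auto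
    moreover have "((id(x := y)) u, C) \<in> set ((y, A) # \<Gamma>)" using uC x_dom by force
    ultimately show ?thesis by blast
  qed
  show ?thesis
    unfolding ctx_renaming_def using y renamed ctx_types_subst_Var[OF y]
    by (metis alpha_imp_betaconv alpha_subst_Var)
qed

end

theorem mainTheorem18:
  fixes enc :: "'v \<Rightarrow> nat" and dec :: "nat \<Rightarrow> 'v" and chi :: "nat list \<Rightarrow> nat"
    and Ax :: "'c \<Rightarrow> 'c \<Rightarrow> bool" and Rl :: "'c \<Rightarrow> 'c \<Rightarrow> 'c \<Rightarrow> bool"
    and \<Gamma> :: "('c, 'v) ctx" and x y :: 'v and A M B :: "('c, 'v) trm"
  assumes "var_setup enc dec chi"
    and "y \<notin> set (map fst \<Gamma>)"
    and "typing enc dec chi Ax Rl ((x, A) # \<Gamma>) M B"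
  shows "typing enc dec chi Ax Rl ((y, A) # \<Gamma>)
           (usubst enc dec chi M x (Var y)) (usubst enc dec chi B x (Var y))"
proof -
  interpret pts enc dec chi Ax Rl by unfold_locales (rule assms(1))
  have x_ok: "\<turnstile> (x, A) # \<Gamma> ok" using assms(3) by (rule typing_imp_ctx_ok)
  then obtain s where "\<turnstile> \<Gamma> ok" and "\<Gamma> \<turnstile> A : Const s" by (cases rule: ctx_ok.cases) auto
  then have y_ok: "\<turnstile> (y, A) # \<Gamma> ok" using assms(2) by (rule ctx_ok_typing.ok_cons)
  have renaming: "Var \<circ> id(x := y) = Var(x := Var y)" by (simp add: fun_upd_comp)
  show ?thesis
    using typing_renaming[OF assms(3) ctx_renaming_rename_head[OF x_ok y_ok]]
    unfolding renaming usubst_def .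
qed

end
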